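(* For all feasible $\boldsymbol\lambda\ne0$ with $\boldsymbol\lambda\succeq0$, we have $M(\boldsymbol\lambda)\succ0$ and $M(\boldsymbol\lambda)\succeq\boldsymbol\lambda$. Similarly, for all feasible $\boldsymbol\lambda\ne0$ with $\boldsymbol\lambda\preceq0$, we have $M(\boldsymbol\lambda)\prec0$ and $M(\boldsymbol\lambda)\preceq\boldsymbol\lambda$.
   Context: Setting: a mixture of two Bernoullis on $\{0,1\}^D$. - The true distribution is $p^*=\pi_1^*B(\cdot\mid\boldsymbol\mu_1^* )+\pi_2^*B(\cdot\mid\boldsymbol\mu_2^* )$, where $B(\mathbf x\mid\boldsymbol\mu)=\prod_i\mu_i^{x_i}(1-\mu_i)^{1-x_i}$, $\pi_1^*\in(0,1)$ and $\pi_2^*=1-\pi_1^*$. Notation: - $\overline{\mathbf x}=\mathbb E_{p^*}[\mathbf x]$, $S_i=\overline x_i(1-\overline x_i)$ and $\boldsymbol\mu^*=(\boldsymbol\mu_1^*-\boldsymbol\mu_2^* )/2$. - For $\boldsymbol\mu_1\in[0,1]^D$, set $\mathbf b=\boldsymbol\mu_1-\overline{\mathbf x}$ and $\lambda_i=2S_i^{-1}\mu_i^*b_i$. Feasible $\boldsymbol\lambda$ are those arising from $\boldsymbol\mu_1\in[0,1]^D$. - $Z_1(\boldsymbol\lambda)=\pi_1^*\prod_i(1+\pi_2^*\lambda_i)+\pi_2^*\prod_i(1-\pi_1^*\lambda_i)$. - $B_{1i}=\prod_{j\ne i}(1+\pi_2^*\lambda_j)$, $B_{2i}=\prod_{j\ne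 i}(1-\pi_1^*\lambda_j)$, and $\Lambda_i=\mu_{1i}(1-\mu_{1i})$. The leading-order EM update of $\boldsymbol\lambda$ in the one-cluster regime ($\pi_1$ small, $\boldsymbol\mu_2=\overline{\mathbf x}$) is $$M(\boldsymbol\lambda)_i=\lambda_i+(2S_i^{-1}\mu_i^* )^2\pi_1^*\pi_2^*\frac{\Lambda_i}{Z_1(\boldsymbol\lambda)}(B_{1i}-B_{2i}).$$ $\succeq$/$\succ$ denote non-strict/strict componentwise order. Standing assumption: $4\pi_1^*\pi_2^*\mu_i^*\mu_j^*\ne0$ for all $i\ne j$. *)

theory Defs
  imports Complex_Main
begin

text \<open>Coordinates are indexed by a finite type 'n, so D = CARD('n).
  Parameters: p1 = pi_1^*, pi_2^* = 1 - p1, m1 = mu_1^*, m2 = mu_2^*.\<close>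

definition xbar :: "real \<Rightarrow> ('n \<Rightarrow> real) \<Rightarrow> ('n \<Rightarrow> real) \<Rightarrow> 'n \<Rightarrow> real" where
  "xbar p1 m1 m2 i = p1 * m1 i + (1 - p1) * m2 i"

definition Svar :: "real \<Rightarrow> ('n \<Rightarrow> real) \<Rightarrow> ('n \<Rightarrow> real) \<Rightarrow> 'n \<Rightarrow> real" where
  "Svar p1 m1 m2 i = xbar p1 m1 m2 i * (1 - xbar p1 m1 m2 i)"

definition mustar :: "('n \<Rightarrow> real) \<Rightarrow> ('n \<Rightarrow> real) \<Rightarrow> 'n \<Rightarrow> real" where
  "mustar m1 m2 i = (m1 i - m2 i) / 2"

definition lam :: "real \<Rightarrow> ('n \<Rightarrow> real) \<Rightarrow> ('n \<Rightarrow> real) \<Rightarrow> ('n \<Rightarrow> real) \<Rightarrow> 'n \<Rightarrow> real" where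
  "lam p1 m1 m2 mu1 i = 2 * inverse (Svar p1 m1 m2 i) * mustar m1 m2 i * (mu1 i - xbar p1 m1 m2 i)"

definition Z1 :: "real \<Rightarrow> ('n::finite \<Rightarrow> real) \<Rightarrow> real" where
  "Z1 p1 l = p1 * (\<Prod>i\<in>UNIV. 1 + (1 - p1) * l i) + (1 - p1) * (\<Prod>i\<in>UNIV. 1 - p1 * l i)"

definition B1 :: "real \<Rightarrow> ('n::finite \<Rightarrow> real) \<Rightarrow> 'n \<Rightarrow> real" where
  "B1 p1 l i = (\<Prod>j\<in>UNIV - {i}. 1 + (1 - p1) * l j)"

definition B2 :: "real \<Rightarrow> ('n::finite \<Rightarrow> real) \<Rightarrow> 'n \<Rightarrow> real" where
  "B2 p1 l i = (\<Prod>j\<in>UNIV - {i}. 1 - p1 * l j)"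

text \<open>Leading-order EM update M(lambda), where lambda = lam(mu1) and Lambda_i = mu1_i (1 - mu1_i).\<close>
definition Mupd :: "real \<Rightarrow> ('n::finite \<Rightarrow> real) \<Rightarrow> ('n \<Rightarrow> real) \<Rightarrow> ('n \<Rightarrow> real) \<Rightarrow> 'n \<Rightarrow> real" where
  "Mupd p1 m1 m2 mu1 i =
     (let l = lam p1 m1 m2 mu1 in
      l i + (2 * inverse (Svar p1 m1 m2 i) * mustar m1 m2 i)^2 * p1 * (1 - p1)
            * (mu1 i * (1 - mu1 i)) / Z1 p1 l * (B1 p1 l i - B2 p1 l i))"

end

theory Submission
  imports Defs
begin

text \<open>Feasibility of \<open>\<mu>\<^sub>1 \<in> [0,1]\<^sup>D\<close> gives \<open>\<pi>\<^sub>1\<^sup>* \<lambda>\<^sub>j \<le> 1\<close>. So if \<open>\<lambda> \<succeq> 0\<close>, every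
  factor of \<open>B\<^sub>1\<^sub>i\<close> is at least 1 and every factor of \<open>B\<^sub>2\<^sub>i\<close> lies in [0,1]; hence
  \<open>Z\<^sub>1 > 0\<close> and the correction term of the update is nonnegative, which gives
  \<open>M(\<lambda>) \<succeq> \<lambda>\<close>. Where \<open>\<lambda>\<^sub>i = 0\<close>, some \<open>\<lambda>\<^sub>j > 0\<close> with \<open>j \<noteq> i\<close> makes
  \<open>B\<^sub>1\<^sub>i > 1 \<ge> B\<^sub>2\<^sub>i\<close>, while \<open>\<mu>\<^sup>*\<^sub>i \<noteq> 0\<close> forces \<open>\<mu>\<^sub>1\<^sub>i\<close> to be the mean
  \<open>xbar\<^sub>i \<in> (0,1)\<close>, so the correction term is strictly positive. The case \<open>\<lambda> \<preceq> 0\<close>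
  reduces to this one by exchanging the two clusters, which negates both \<open>\<lambda>\<close> and \<open>M(\<lambda>)\<close>.\<close>

lemma diff_mult_diff_le_Bernoulli_var:
  fixes x c u :: real
  assumes "0 \<le> x" "x \<le> 1" "0 \<le> c" "c \<le> 1" "0 \<le> u" "u \<le> 1"
  shows "(x - c) * (u - x) \<le> x * (1 - x)"
proof -
  consider "c \<le> x" "x \<le> u" | "x < c" "u < x" | "(x - c) * (u - x) \<le> 0"
    by (metis linorder_not_le mult_nonneg_nonpos mult_nonpos_nonneg diff_ge_0_iff_ge diff_le_0_iff_le
        less_imp_le)
  then show ?thesis
  proof cases
    case 1
    then show ?thesis using assms by (intro mult_mono) auto
  next
    case 2
    then have "(c - x) * (x - u) \<le> (1 - x) * x" using assms by (intro mult_mono) auto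
    then show ?thesis by (simp add: algebra_simps)
  next
    case 3
    moreover have "0 \<le> x * (1 - x)" using assms by simp
    ultimately show ?thesis by linarith
  qed
qed

lemma convex_comb_strictly_between:
  fixes p a c :: real
  assumes "0 < p" "p < 1" "0 \<le> a" "a \<le> 1" "0 \<le> c" "c \<le> 1" "a \<noteq> c"
  shows "0 < p * a + (1 - p) * c" "p * a + (1 - p) * c < 1"
proof -
  have "0 < a \<or> 0 < c" "a < 1 \<or> c < 1" using assms by auto
  moreover have "0 \<le> p * a" "0 \<le> (1 - p) * c" "0 \<le> p * (1 - a)" "0 \<le> (1 - p) * (1 - c)"
    using assms by simp_all
  ultimately have "0 < p * a + (1 - p) * c \<and> 0 < p * (1 - a) + (1 - p) * (1 - c)"
    using assms by (smt (verit) mult_pos_pos)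
  then show "0 < p * a + (1 - p) * c" "p * a + (1 - p) * c < 1" by (simp_all add: algebra_simps)
qed

lemma xbar_bounds:
  assumes "0 \<le> p" "p \<le> 1" "0 \<le> m1 i" "m1 i \<le> 1" "0 \<le> m2 i" "m2 i \<le> 1"
  shows "0 \<le> xbar p m1 m2 i" "xbar p m1 m2 i \<le> 1"
  using assms convex_bound_le[of "m1 i" 1 "m2 i" p "1 - p"] by (simp_all add: xbar_def)

lemma xbar_strictly_between:
  assumes "0 < p" "p < 1" "0 \<le> m1 i" "m1 i \<le> 1" "0 \<le> m2 i" "m2 i \<le> 1"
    and "mustar m1 m2 i \<noteq> 0"
  shows "0 < xbar p m1 m2 i" "xbar p m1 m2 i < 1"
  using assms convex_comb_strictly_between[of p "m1 i" "m2 i"] by (simp_all add: xbar_def mustar_def)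

lemma lam_eq: "lam p m1 m2 mu1 i = (m1 i - m2 i) * (mu1 i - xbar p m1 m2 i) / Svar p m1 m2 i"
proof -
  have "lam p m1 m2 mu1 i
      = (2 / 2) * ((m1 i - m2 i) * (mu1 i - xbar p m1 m2 i) * inverse (Svar p m1 m2 i))"
    unfolding lam_def mustar_def by (simp only: divide_inverse mult_ac)
  then show ?thesis by (simp add: divide_inverse)
qed

lemma xbar_minus_right: "xbar p m1 m2 i - m2 i = p * (m1 i - m2 i)"
  unfolding xbar_def by (simp add: algebra_simps)

lemma mult_lam_le_1:
  assumes "0 < p" "p < 1" "0 \<le> m1 i" "m1 i \<le> 1" "0 \<le> m2 i" "m2 i \<le> 1"
    and "0 \<le> mu1 i" "mu1 i \<le> 1"
  shows "p * lam p m1 m2 mu1 i \<le> 1"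
proof -
  define x where "x = xbar p m1 m2 i"
  have x: "0 \<le> x" "x \<le> 1"
    using xbar_bounds[where p = p and i = i] assms unfolding x_def by auto
  have "p * lam p m1 m2 mu1 i = p * (m1 i - m2 i) * (mu1 i - x) / Svar p m1 m2 i"
    by (simp only: lam_eq x_def times_divide_eq_right mult.assoc)
  also have "\<dots> = (x - m2 i) * (mu1 i - x) / (x * (1 - x))"
    by (simp only: xbar_minus_right x_def Svar_def)
  also have "\<dots> \<le> 1" \<comment> \<open>also when \<open>x * (1 - x) = 0\<close>, as division by zero yields 0\<close>
    using diff_mult_diff_le_Bernoulli_var[of x "m2 i" "mu1 i"] x assms
    by (cases "x * (1 - x) = 0") (simp_all add: divide_le_eq_1)
  finally show ?thesis .
qed

lemma Z1_pos:
  fixes l :: "'n::finite \<Rightarrow> real"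
  assumes "0 < p" "p < 1" "\<And>j. 0 \<le> l j" "\<And>j. p * l j \<le> 1"
  shows "0 < Z1 p l"
proof -
  have "1 \<le> (\<Prod>j\<in>UNIV. 1 + (1 - p) * l j)" using assms by (intro prod_ge_1) simp
  then have "p \<le> p * (\<Prod>j\<in>UNIV. 1 + (1 - p) * l j)" using assms by simp
  moreover have "0 \<le> (1 - p) * (\<Prod>j\<in>UNIV. 1 - p * l j)" using assms by (simp add: prod_nonneg)
  ultimately show ?thesis using assms unfolding Z1_def by linarith
qed

lemma B1_ge_1:
  assumes "p \<le> 1" "\<And>j. 0 \<le> l j"
  shows "1 \<le> B1 p l i"
  using assms unfolding B1_def by (intro prod_ge_1) simp

lemma B1_gt_1:
  assumes "p < 1" "\<And>j. 0 \<le> l j" "0 < l j" "j \<noteq> i"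
  shows "1 < B1 p l i"
  using assms unfolding B1_def by (intro less_1_prod2[of _ j]) auto

lemma B2_le_1:
  assumes "0 \<le> p" "\<And>j. 0 \<le> l j" "\<And>j. p * l j \<le> 1"
  shows "B2 p l i \<le> 1"
  using assms unfolding B2_def by (intro prod_le_1) simp

definition Mgain ::
    "real \<Rightarrow> ('n::finite \<Rightarrow> real) \<Rightarrow> ('n \<Rightarrow> real) \<Rightarrow> ('n \<Rightarrow> real) \<Rightarrow> 'n \<Rightarrow> real"
  where
  "Mgain p1 m1 m2 mu1 i = (2 * inverse (Svar p1 m1 m2 i) * mustar m1 m2 i)^2 * p1 * (1 - p1)
     * (mu1 i * (1 - mu1 i)) / Z1 p1 (lam p1 m1 m2 mu1)"

lemma Mupd_eq_Mgain:
  "Mupd p1 m1 m2 mu1 i = lam p1 m1 m2 mu1 i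
     + Mgain p1 m1 m2 mu1 i * (B1 p1 (lam p1 m1 m2 mu1) i - B2 p1 (lam p1 m1 m2 mu1) i)"
  unfolding Mupd_def Mgain_def Let_def ..

lemma Mgain_nonneg:
  assumes "0 \<le> p" "p \<le> 1" "0 \<le> mu1 i" "mu1 i \<le> 1" "0 < Z1 p (lam p m1 m2 mu1)"
  shows "0 \<le> Mgain p m1 m2 mu1 i"
  using assms unfolding Mgain_def by simp

lemma Mgain_pos:
  assumes "0 < p" "p < 1" "0 \<le> m1 i" "m1 i \<le> 1" "0 \<le> m2 i" "m2 i \<le> 1"
    and "mustar m1 m2 i \<noteq> 0" "lam p m1 m2 mu1 i = 0" "0 < Z1 p (lam p m1 m2 mu1)"
  shows "0 < Mgain p m1 m2 mu1 i"
proof -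
  have x: "0 < xbar p m1 m2 i" "xbar p m1 m2 i < 1"
    using xbar_strictly_between[where p = p and i = i] assms by auto
  then have S: "0 < Svar p m1 m2 i" by (simp add: Svar_def)
  then have "mu1 i = xbar p m1 m2 i" using assms(7,8) by (simp add: lam_def)
  then show ?thesis using assms x S unfolding Mgain_def by (simp add: zero_less_mult_iff)
qed

lemma xbar_swap: "xbar (1 - p) m2 m1 = xbar p m1 m2"
  by (simp add: fun_eq_iff xbar_def algebra_simps)

lemma Svar_swap: "Svar (1 - p) m2 m1 = Svar p m1 m2"
  by (simp add: fun_eq_iff Svar_def xbar_swap)

lemma mustar_swap: "mustar m2 m1 i = - mustar m1 m2 i"
  by (simp add: mustar_def field_simps)

lemma lam_swap: "lam (1 - p) m2 m1 mu1 i = - lam p m1 m2 mu1 i"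
  unfolding lam_eq xbar_swap Svar_swap minus_diff_eq[of "m1 i" "m2 i", symmetric]
  by (simp only: mult_minus_left minus_divide_left)

lemma Z1_swap: "Z1 (1 - p) (\<lambda>i. - l i) = Z1 p l"
  by (simp add: Z1_def algebra_simps)

lemma B1_swap: "B1 (1 - p) (\<lambda>j. - l j) i = B2 p l i"
  by (simp add: B1_def B2_def algebra_simps)

lemma B2_swap: "B2 (1 - p) (\<lambda>j. - l j) i = B1 p l i"
  by (simp add: B1_def B2_def algebra_simps)

lemma Mgain_swap: "Mgain (1 - p) m2 m1 mu1 i = Mgain p m1 m2 mu1 i"
  unfolding Mgain_def Svar_swap mustar_swap[of m2 m1] lam_swap[abs_def] Z1_swap
  by (simp add: mult_ac)

lemma Mupd_swap: "Mupd (1 - p) m2 m1 mu1 i = - Mupd p m1 m2 mu1 i"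
  unfolding Mupd_eq_Mgain Mgain_swap lam_swap[abs_def] B1_swap B2_swap
  by (simp add: algebra_simps)

lemma Mupd_pos_ge_lam:
  fixes m1 m2 mu1 :: "'n::finite \<Rightarrow> real"
  assumes p: "0 < p" "p < 1"
    and m1: "\<And>j. 0 \<le> m1 j \<and> m1 j \<le> 1"
    and m2: "\<And>j. 0 \<le> m2 j \<and> m2 j \<le> 1"
    and mu1: "\<And>j. 0 \<le> mu1 j \<and> mu1 j \<le> 1"
    and mustar_ne_0: "\<And>i j. i \<noteq> j \<Longrightarrow> mustar m1 m2 i \<noteq> 0"
    and nonneg: "\<And>j. 0 \<le> lam p m1 m2 mu1 j"
    and nonzero: "lam p m1 m2 mu1 \<noteq> (\<lambda>j. 0)"
  shows "lam p m1 m2 mu1 i \<le> Mupd p m1 m2 mu1 i" "0 < Mupd p m1 m2 mu1 i"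
proof -
  define l where "l = lam p m1 m2 mu1"
  have l_nonneg: "0 \<le> l j" for j using nonneg by (simp add: l_def)
  have feasible: "p * l j \<le> 1" for j
    unfolding l_def using p m1 m2 mu1 by (intro mult_lam_le_1) auto
  have Z: "0 < Z1 p l" by (rule Z1_pos[OF p l_nonneg feasible])
  have gain: "0 \<le> Mgain p m1 m2 mu1 i"
    using p mu1[of i] Z unfolding l_def by (intro Mgain_nonneg) auto
  have B1: "1 \<le> B1 p l i" using p l_nonneg by (intro B1_ge_1) auto
  have B2: "B2 p l i \<le> 1" using p l_nonneg feasible by (intro B2_le_1) auto
  have M: "Mupd p m1 m2 mu1 i = l i + Mgain p m1 m2 mu1 i * (B1 p l i - B2 p l i)"
    unfolding l_def by (rule Mupd_eq_Mgain)
  show ge: "lam p m1 m2 mu1 i \<le> Mupd p m1 m2 mu1 i"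
    using M B1 B2 gain by (simp add: l_def)
  show "0 < Mupd p m1 m2 mu1 i"
  proof (cases "l i = 0")
    case True
    obtain j where "l j \<noteq> 0" using nonzero unfolding l_def by auto
    with True have j: "0 < l j" "j \<noteq> i" using l_nonneg[of j] by auto
    then have "1 < B1 p l i" using p l_nonneg by (intro B1_gt_1) auto
    moreover have "0 < Mgain p m1 m2 mu1 i"
      using p m1[of i] m2[of i] mustar_ne_0[OF j(2)[symmetric]] True Z unfolding l_def
      by (intro Mgain_pos) auto
    ultimately show ?thesis using M B2 True by simp
  next
    case False
    then show ?thesis using ge l_nonneg[of i] unfolding l_def by linarith
  qed
qed

theorem mainTheorem10:
  fixes p1 :: real and m1 m2 mu1 :: "'n::finite \<Rightarrow> real"
  assumes p1: "0 < p1" "p1 < 1"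
    and m1: "\<And>i. 0 \<le> m1 i \<and> m1 i \<le> 1"
    and m2: "\<And>i. 0 \<le> m2 i \<and> m2 i \<le> 1"
    and stand: "\<And>i j. i \<noteq> j \<Longrightarrow> 4 * p1 * (1 - p1) * mustar m1 m2 i * mustar m1 m2 j \<noteq> 0"
    and mu1: "\<And>i. 0 \<le> mu1 i \<and> mu1 i \<le> 1"
  shows "(lam p1 m1 m2 mu1 \<noteq> (\<lambda>i. 0) \<and> (\<forall>i. lam p1 m1 m2 mu1 i \<ge> 0) \<longrightarrow>
            (\<forall>i. Mupd p1 m1 m2 mu1 i > 0) \<and> (\<forall>i. Mupd p1 m1 m2 mu1 i \<ge> lam p1 m1 m2 mu1 i))
       \<and> (lam p1 m1 m2 mu1 \<noteq> (\<lambda>i. 0) \<and> (\<forall>i. lam p1 m1 m2 mu1 i \<le> 0) \<longrightarrow>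
            (\<forall>i. Mupd p1 m1 m2 mu1 i < 0) \<and> (\<forall>i. Mupd p1 m1 m2 mu1 i \<le> lam p1 m1 m2 mu1 i))"
proof -
  have mustar_ne_0: "mustar m1 m2 i \<noteq> 0" if "i \<noteq> j" for i j
    using stand[OF that] by auto
  have mustar_swapped_ne_0: "mustar m2 m1 i \<noteq> 0" if "i \<noteq> j" for i j
    using mustar_ne_0[OF that] by (simp add: mustar_swap[of m2 m1])
  have swapped_p1: "0 < 1 - p1" "1 - p1 < 1" using p1 by simp_all
  show ?thesis
  proof (intro conjI impI allI; elim conjE)
    fix i
    assume "lam p1 m1 m2 mu1 \<noteq> (\<lambda>i. 0)" "\<forall>i. 0 \<le> lam p1 m1 m2 mu1 i"
    then show "0 < Mupd p1 m1 m2 mu1 i" "lam p1 m1 m2 mu1 i \<le> Mupd p1 m1 m2 mu1 i"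
      using Mupd_pos_ge_lam[OF p1 m1 m2 mu1 mustar_ne_0] by auto
  next
    fix i
    assume "lam p1 m1 m2 mu1 \<noteq> (\<lambda>i. 0)" "\<forall>i. lam p1 m1 m2 mu1 i \<le> 0"
    then have "\<And>j. 0 \<le> lam (1 - p1) m2 m1 mu1 j" "lam (1 - p1) m2 m1 mu1 \<noteq> (\<lambda>i. 0)"
      by (auto simp: lam_swap fun_eq_iff)
    from Mupd_pos_ge_lam[OF swapped_p1 m2 m1 mu1 mustar_swapped_ne_0 this]
    show "Mupd p1 m1 m2 mu1 i < 0" "Mupd p1 m1 m2 mu1 i \<le> lam p1 m1 m2 mu1 i"
      by (simp_all add: Mupd_swap lam_swap)
  qed
qed

end
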